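(* Let $(X,\tau)$ be a topological space with $|X|=\kappa$. Then: (i) $X$ is completely Hausdorff if and only if every compact subset of $X$ (of cardinality $\le\kappa$) is zero-closed; (ii) $X$ is Urysohn if and only if every compact subset of $X$ is Urysohn-closed; (iii) $X$ is Hausdorff if and only if every compact subset of $X$ is $\theta$-closed; (iv) $X$ is a kc-space if and only if every compact subset of $X$ is closed; (v) $X$ is weakly Hausdorff if and only if every compact subset of $X$ of cardinality $\le 1$ is $\delta$-closed; (vi) $X$ is $T_1$ if and only if every compact subset of $X$ of cardinality $\le 1$ is closed; (vii) $X$ is $T_0$ if and only if every compact subset of $X$ of cardinality $\le 1$ is $\lambda$-closed.
   Context: A subset $A$ of $X$ is zero-open if for each $x\in A$ there exist a zero-set $Z$ and a cozero-set $C$ of $X$ with $x\in C\subseteq Z\subseteq A$; zero-closed sets are complements of zero-open sets. $X$ is completely Hausdorff if any two distinct points have disjoint cozero-set neighborhoods. A set $A$ is Urysohn-open if for each $x\in A$ there are open $U,V$ with $x\in U\subseteq \mathrm{Cl}(U)\subseteq V\subseteq \mathrm{Cl}(V)\subseteq A$; Urysohn-closed sets are their complements. $X$ is Urysohn if any two distinct points have open neighborhoods with disjoint closures. The $\theta$-closure of $A$ is $\{x\in X:\mathrm{Cl}(U)\cap A\neq\emptyset$ for every open $U\ni x\}$, and $A$ is $\theta$-closed if it equals its $\theta$-closure. A set $U$ is regular open if $U=\mathrm{Int}(\mathrm{Cl}(U))$; $x$ is a $\delta$-cluster point of $A$ if $A\cap U\ne\emptyset$ for every regular open $U\ni x$;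 $A$ is $\delta$-closed if it contains all its $\delta$-cluster points. A $\Lambda$-set is an intersection of open sets; $A$ is $\lambda$-closed if $A=L\cap C$ with $L$ a $\Lambda$-set and $C$ closed. $X$ is a kc-space if every compact subset is closed. $X$ is weakly Hausdorff if every singleton is $\delta$-closed (equivalently its semi-regularization is $T_1$). *)

theory Defs
  imports "HOL-Analysis.Analysis"
begin

definition zero_set :: "'a topology \<Rightarrow> 'a set \<Rightarrow> bool" where
  "zero_set X Z \<longleftrightarrow> (\<exists>f. continuous_map X euclideanreal f \<and> Z = {x \<in> topspace X. f x = 0})"

definition cozero_set :: "'a topology \<Rightarrow> 'a set \<Rightarrow> bool" where
  "cozero_set X C \<longleftrightarrow> (\<exists>f. continuous_map X euclideanreal f \<and> C = {x \<in> topspace X. f x \<noteq> 0})"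

definition zero_open :: "'a topology \<Rightarrow> 'a set \<Rightarrow> bool" where
  "zero_open X A \<longleftrightarrow> A \<subseteq> topspace X \<and>
     (\<forall>x\<in>A. \<exists>Z C. zero_set X Z \<and> cozero_set X C \<and> x \<in> C \<and> C \<subseteq> Z \<and> Z \<subseteq> A)"

definition zero_closed :: "'a topology \<Rightarrow> 'a set \<Rightarrow> bool" where
  "zero_closed X A \<longleftrightarrow> A \<subseteq> topspace X \<and> zero_open X (topspace X - A)"

definition completely_Hausdorff_space :: "'a topology \<Rightarrow> bool" where
  "completely_Hausdorff_space X \<longleftrightarrow>
     (\<forall>x\<in>topspace X. \<forall>y\<in>topspace X. x \<noteq> y \<longrightarrow>
        (\<exists>U V. cozero_set X U \<and> cozero_set X V \<and> x \<in> U \<and> y \<in> V \<and> disjnt U V))"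

definition urysohn_open :: "'a topology \<Rightarrow> 'a set \<Rightarrow> bool" where
  "urysohn_open X A \<longleftrightarrow> A \<subseteq> topspace X \<and>
     (\<forall>x\<in>A. \<exists>U V. openin X U \<and> openin X V \<and> x \<in> U \<and>
        X closure_of U \<subseteq> V \<and> X closure_of V \<subseteq> A)"

definition urysohn_closed :: "'a topology \<Rightarrow> 'a set \<Rightarrow> bool" where
  "urysohn_closed X A \<longleftrightarrow> A \<subseteq> topspace X \<and> urysohn_open X (topspace X - A)"

definition Urysohn_space :: "'a topology \<Rightarrow> bool" where
  "Urysohn_space X \<longleftrightarrow>
     (\<forall>x\<in>topspace X. \<forall>y\<in>topspace X. x \<noteq> y \<longrightarrow>
        (\<exists>U V. openin X U \<and> openin X V \<and> x \<in> U \<and> y \<in> V \<and>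
               disjnt (X closure_of U) (X closure_of V)))"

definition theta_closure :: "'a topology \<Rightarrow> 'a set \<Rightarrow> 'a set" where
  "theta_closure X A = {x \<in> topspace X. \<forall>U. openin X U \<and> x \<in> U \<longrightarrow> X closure_of U \<inter> A \<noteq> {}}"

definition theta_closed :: "'a topology \<Rightarrow> 'a set \<Rightarrow> bool" where
  "theta_closed X A \<longleftrightarrow> theta_closure X A = A"

definition regular_open :: "'a topology \<Rightarrow> 'a set \<Rightarrow> bool" where
  "regular_open X U \<longleftrightarrow> U = X interior_of (X closure_of U)"

definition delta_closed :: "'a topology \<Rightarrow> 'a set \<Rightarrow> bool" where
  "delta_closed X A \<longleftrightarrow> A \<subseteq> topspace X \<and>
     (\<forall>x\<in>topspace X. (\<forall>U. regular_open X U \<and> x \<in> U \<longrightarrow> A \<inter> U \<noteq> {}) \<longrightarrow> x \<in> A)"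

definition Lambda_set :: "'a topology \<Rightarrow> 'a set \<Rightarrow> bool" where
  "Lambda_set X L \<longleftrightarrow> (\<exists>\<U>. (\<forall>U\<in>\<U>. openin X U) \<and> L = topspace X \<inter> \<Inter>\<U>)"

definition lambda_closed :: "'a topology \<Rightarrow> 'a set \<Rightarrow> bool" where
  "lambda_closed X A \<longleftrightarrow> (\<exists>L C. Lambda_set X L \<and> closedin X C \<and> A = L \<inter> C)"

definition weakly_Hausdorff_space :: "'a topology \<Rightarrow> bool" where
  "weakly_Hausdorff_space X \<longleftrightarrow> (\<forall>x\<in>topspace X. delta_closed X {x})"

end

theory Submission
  imports Defs
begin

(* A point outside a compact set K is separated from each point of K; finitely many of the
   neighbourhoods of points of K cover K, and the intersection of the corresponding
   neighbourhoods of the point is separated from their union.  This gives (i) to (iii), where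
   for (i) one needs that finite intersections and unions of cozero sets are cozero sets.
   Conversely, singletons are compact, and closedness of the complement of a point in each of
   these senses is exactly the separation of that point from all others.  For (v) to (vii) the
   compact sets of cardinality at most one are the empty set and the singletons. *)

(* S is the class of admissible neighbourhoods (open sets, or cozero sets) and sep the required
   separation of a neighbourhood of x from one of a point of K (disjointness, or disjointness of
   closures). *)
lemma compactin_separation_from_point:
  assumes K: "compactin X K" and x: "x \<in> topspace X"
    and S_openin: "\<And>V. S V \<Longrightarrow> openin X V"
    and S_topspace: "S (topspace X)" and S_empty: "S {}"
    and S_Int: "\<And>U V. S U \<Longrightarrow> S V \<Longrightarrow> S (U \<inter> V)"
    and S_Un: "\<And>U V. S U \<Longrightarrow> S V \<Longrightarrow> S (U \<union> V)"
    and sep_empty: "\<And>U. sep U {}"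
    and sep_antimono: "\<And>U U' V. sep U V \<Longrightarrow> U' \<subseteq> U \<Longrightarrow> sep U' V"
    and sep_Un: "\<And>U V V'. sep U V \<Longrightarrow> sep U V' \<Longrightarrow> sep U (V \<union> V')"
    and sep_points: "\<And>y. y \<in> K \<Longrightarrow> \<exists>U V. S U \<and> S V \<and> x \<in> U \<and> y \<in> V \<and> sep U V"
  shows "\<exists>U W. S U \<and> S W \<and> x \<in> U \<and> K \<subseteq> W \<and> sep U W"
proof -
  define \<V> where "\<V> = {V. S V \<and> (\<exists>U. S U \<and> x \<in> U \<and> sep U V)}"
  have \<V>_openin: "\<And>V. V \<in> \<V> \<Longrightarrow> openin X V"
    using S_openin unfolding \<V>_def by blast
  have K_cover: "K \<subseteq> \<Union>\<V>"
  proof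
    fix y
    assume "y \<in> K"
    then obtain U V where "S U" "S V" "x \<in> U" "y \<in> V" "sep U V"
      using sep_points by blast
    then show "y \<in> \<Union>\<V>"
      unfolding \<V>_def by blast
  qed
  obtain \<F> where \<F>: "finite \<F>" "\<F> \<subseteq> \<V>" "K \<subseteq> \<Union>\<F>"
    using compactinD[OF K \<V>_openin K_cover] by blast
  have "\<exists>U. S U \<and> x \<in> U \<and> S (\<Union>\<F>) \<and> sep U (\<Union>\<F>)"
    using \<F>(1,2)
  proof (induction \<F> rule: finite_induct)
    case empty
    show ?case
      using S_topspace S_empty sep_empty x by auto
  next
    case (insert V \<F>)
    then obtain U where U: "S U" "x \<in> U" "S (\<Union>\<F>)" "sep U (\<Union>\<F>)"
      by auto
    obtain U' where U': "S U'" "x \<in> U'" "S V" "sep U' V"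
      using insert.prems unfolding \<V>_def by auto
    have "sep (U' \<inter> U) (V \<union> \<Union>\<F>)"
      by (rule sep_Un[OF sep_antimono[OF U'(4)] sep_antimono[OF U(4)]]) auto
    then show ?case
      using U U' S_Int S_Un by (intro exI[of _ "U' \<inter> U"]) auto
  qed
  then show ?thesis
    using \<F>(3) by blast
qed

lemma cozero_set_topspace: "cozero_set X (topspace X)"
  unfolding cozero_set_def by (intro exI[of _ "\<lambda>x. 1"]) auto

lemma cozero_set_empty: "cozero_set X {}"
  unfolding cozero_set_def by (intro exI[of _ "\<lambda>x. 0"]) auto

lemma cozero_set_Int:
  assumes "cozero_set X A" "cozero_set X B"
  shows "cozero_set X (A \<inter> B)"
proof -
  obtain f g where "continuous_map X euclideanreal f" "A = {x \<in> topspace X. f x \<noteq> 0}"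
    and "continuous_map X euclideanreal g" "B = {x \<in> topspace X. g x \<noteq> 0}"
    using assms unfolding cozero_set_def by blast
  then show ?thesis
    unfolding cozero_set_def
    by (intro exI[of _ "\<lambda>x. f x * g x"]) (auto intro: continuous_map_real_mult)
qed

lemma cozero_set_Un:
  assumes "cozero_set X A" "cozero_set X B"
  shows "cozero_set X (A \<union> B)"
proof -
  obtain f g where "continuous_map X euclideanreal f" "A = {x \<in> topspace X. f x \<noteq> 0}"
    and "continuous_map X euclideanreal g" "B = {x \<in> topspace X. g x \<noteq> 0}"
    using assms unfolding cozero_set_def by blast
  moreover have "\<And>x. \<bar>f x\<bar> + \<bar>g x\<bar> \<noteq> 0 \<longleftrightarrow> f x \<noteq> 0 \<or> g x \<noteq> 0"
    by auto
  ultimately show ?thesis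
    unfolding cozero_set_def
    by (intro exI[of _ "\<lambda>x. \<bar>f x\<bar> + \<bar>g x\<bar>"])
      (auto intro!: continuous_map_add continuous_map_real_abs)
qed

lemma openin_cozero_set:
  assumes "cozero_set X C"
  shows "openin X C"
proof -
  obtain f where f: "continuous_map X euclideanreal f" and C: "C = {x \<in> topspace X. f x \<in> - {0}}"
    using assms unfolding cozero_set_def by auto
  show ?thesis
    unfolding C by (rule openin_continuous_map_preimage[OF f]) auto
qed

lemma zero_set_topspace_Diff: "cozero_set X C \<Longrightarrow> zero_set X (topspace X - C)"
  unfolding cozero_set_def zero_set_def by auto

lemma cozero_set_topspace_Diff: "zero_set X Z \<Longrightarrow> cozero_set X (topspace X - Z)"
  unfolding cozero_set_def zero_set_def by auto

lemma compactin_imp_zero_closed: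
  assumes CH: "completely_Hausdorff_space X" and K: "compactin X K"
  shows "zero_closed X K"
  unfolding zero_closed_def zero_open_def
proof (intro conjI ballI)
  show K_sub: "K \<subseteq> topspace X"
    using K by (rule compactin_subset_topspace)
  fix x
  assume x: "x \<in> topspace X - K"
  have sep_points: "\<exists>U V. cozero_set X U \<and> cozero_set X V \<and> x \<in> U \<and> y \<in> V \<and> disjnt U V"
    if "y \<in> K" for y
  proof -
    have "x \<in> topspace X" "y \<in> topspace X" "x \<noteq> y"
      using x that K_sub by auto
    then show ?thesis
      using CH unfolding completely_Hausdorff_space_def by blast
  qed
  have "\<exists>U W. cozero_set X U \<and> cozero_set X W \<and> x \<in> U \<and> K \<subseteq> W \<and> disjnt U W"
    by (rule compactin_separation_from_point[OF K, where S = "cozero_set X" and sep = disjnt])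
      (use x sep_points in \<open>auto simp: openin_cozero_set cozero_set_topspace cozero_set_empty
        cozero_set_Int cozero_set_Un disjnt_iff\<close>)
  then obtain U W where "cozero_set X U" "cozero_set X W" "x \<in> U" "K \<subseteq> W" "disjnt U W"
    by blast
  moreover have "U \<subseteq> topspace X"
    using openin_subset[OF openin_cozero_set[OF \<open>cozero_set X U\<close>]] .
  ultimately show "\<exists>Z C. zero_set X Z \<and> cozero_set X C \<and> x \<in> C \<and> C \<subseteq> Z \<and> Z \<subseteq> topspace X - K"
    by (intro exI[of _ "topspace X - W"] exI[of _ U])
      (auto simp: zero_set_topspace_Diff disjnt_iff)
qed simp

lemma zero_closed_sing_imp_completely_Hausdorff_space:
  assumes "\<And>y. y \<in> topspace X \<Longrightarrow> zero_closed X {y}"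
  shows "completely_Hausdorff_space X"
  unfolding completely_Hausdorff_space_def
proof (intro ballI impI)
  fix x y
  assume x: "x \<in> topspace X" and y: "y \<in> topspace X" and "x \<noteq> y"
  then obtain Z C where "zero_set X Z" "cozero_set X C" "x \<in> C" "C \<subseteq> Z" "Z \<subseteq> topspace X - {y}"
    using assms[OF y] unfolding zero_closed_def zero_open_def by blast
  then show "\<exists>U V. cozero_set X U \<and> cozero_set X V \<and> x \<in> U \<and> y \<in> V \<and> disjnt U V"
    using y by (intro exI[of _ C] exI[of _ "topspace X - Z"])
      (auto simp: cozero_set_topspace_Diff disjnt_iff)
qed

lemma completely_Hausdorff_space_iff_compactin_zero_closed:
  "completely_Hausdorff_space X \<longleftrightarrow> (\<forall>K. compactin X K \<longrightarrow> zero_closed X K)"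
proof (intro iffI allI impI)
  show "zero_closed X K" if "completely_Hausdorff_space X" "compactin X K" for K
    using that by (rule compactin_imp_zero_closed)
next
  assume "\<forall>K. compactin X K \<longrightarrow> zero_closed X K"
  then show "completely_Hausdorff_space X"
    by (intro zero_closed_sing_imp_completely_Hausdorff_space) simp
qed

lemma openin_Int_closure_of_topspace_Diff_closure_of:
  assumes "openin X W"
  shows "W \<inter> X closure_of (topspace X - X closure_of W) = {}"
proof -
  have "W \<subseteq> X closure_of W"
    using closure_of_subset[OF openin_subset[OF assms]] .
  then show ?thesis
    by (auto simp: openin_Int_closure_of_eq_empty[OF assms])
qed

lemma compactin_imp_urysohn_closed:
  assumes UR: "Urysohn_space X" and K: "compactin X K"
  shows "urysohn_closed X K"
  unfolding urysohn_closed_def urysohn_open_def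
proof (intro conjI ballI)
  show K_sub: "K \<subseteq> topspace X"
    using K by (rule compactin_subset_topspace)
  fix x
  assume x: "x \<in> topspace X - K"
  let ?sep = "\<lambda>U V. disjnt (X closure_of U) (X closure_of V)"
  have sep_points: "\<exists>U V. openin X U \<and> openin X V \<and> x \<in> U \<and> y \<in> V \<and> ?sep U V"
    if "y \<in> K" for y
  proof -
    have "x \<in> topspace X" "y \<in> topspace X" "x \<noteq> y"
      using x that K_sub by auto
    then show ?thesis
      using UR unfolding Urysohn_space_def by blast
  qed
  have "\<exists>U W. openin X U \<and> openin X W \<and> x \<in> U \<and> K \<subseteq> W \<and> ?sep U W"
  proof (rule compactin_separation_from_point[OF K, where S = "openin X" and sep = ?sep])
    show "\<And>U U' V. ?sep U V \<Longrightarrow> U' \<subseteq> U \<Longrightarrow> ?sep U' V"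
      by (meson closure_of_mono disjnt_subset1)
  qed (use x sep_points in \<open>auto simp: disjnt_iff\<close>)
  then obtain U W where "openin X U" "openin X W" "x \<in> U" "K \<subseteq> W" "?sep U W"
    by blast
  define V where "V = topspace X - X closure_of W"
  have "openin X V"
    unfolding V_def by (simp add: openin_diff)
  moreover have "X closure_of U \<subseteq> V"
    using \<open>?sep U W\<close> closure_of_subset_topspace[of X U] by (auto simp: V_def disjnt_iff)
  moreover have "X closure_of V \<subseteq> topspace X - K"
    using openin_Int_closure_of_topspace_Diff_closure_of[OF \<open>openin X W\<close>] \<open>K \<subseteq> W\<close>
      closure_of_subset_topspace[of X V] unfolding V_def by blast
  ultimately show "\<exists>U V. openin X U \<and> openin X V \<and> x \<in> U \<and>
                    X closure_of U \<subseteq> V \<and> X closure_of V \<subseteq> topspace X - K"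
    using \<open>openin X U\<close> \<open>x \<in> U\<close> by blast
qed simp

lemma urysohn_closed_sing_imp_Urysohn_space:
  assumes "\<And>y. y \<in> topspace X \<Longrightarrow> urysohn_closed X {y}"
  shows "Urysohn_space X"
  unfolding Urysohn_space_def
proof (intro ballI impI)
  fix x y
  assume x: "x \<in> topspace X" and y: "y \<in> topspace X" and "x \<noteq> y"
  then obtain U V where "openin X U" "openin X V" "x \<in> U" "X closure_of U \<subseteq> V"
      and "X closure_of V \<subseteq> topspace X - {y}"
    using assms[OF y] unfolding urysohn_closed_def urysohn_open_def by blast
  moreover have "V \<inter> X closure_of (topspace X - X closure_of V) = {}"
    using \<open>openin X V\<close> by (rule openin_Int_closure_of_topspace_Diff_closure_of)
  ultimately show "\<exists>U V. openin X U \<and> openin X V \<and> x \<in> U \<and> y \<in> V \<and>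
                     disjnt (X closure_of U) (X closure_of V)"
    using y by (intro exI[of _ U] exI[of _ "topspace X - X closure_of V"]) (auto simp: disjnt_iff)
qed

lemma Urysohn_space_iff_compactin_urysohn_closed:
  "Urysohn_space X \<longleftrightarrow> (\<forall>K. compactin X K \<longrightarrow> urysohn_closed X K)"
proof (intro iffI allI impI)
  show "urysohn_closed X K" if "Urysohn_space X" "compactin X K" for K
    using that by (rule compactin_imp_urysohn_closed)
next
  assume "\<forall>K. compactin X K \<longrightarrow> urysohn_closed X K"
  then show "Urysohn_space X"
    by (intro urysohn_closed_sing_imp_Urysohn_space) simp
qed

lemma subset_theta_closure:
  assumes "A \<subseteq> topspace X"
  shows "A \<subseteq> theta_closure X A"
proof -
  have "U \<subseteq> X closure_of U" if "openin X U" for U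
    using closure_of_subset[OF openin_subset[OF that]] .
  then show ?thesis
    using assms unfolding theta_closure_def by blast
qed

lemma compactin_imp_theta_closed:
  assumes T2: "Hausdorff_space X" and K: "compactin X K"
  shows "theta_closed X K"
proof -
  have "x \<notin> theta_closure X K" if x: "x \<in> topspace X - K" for x
  proof -
    have "compactin X {x}" "disjnt {x} K"
      using x by auto
    then obtain U V where "openin X U" "openin X V" "{x} \<subseteq> U" "K \<subseteq> V" "disjnt U V"
      by (rule Hausdorff_space_compact_separation[OF T2 _ K])
    then have "V \<inter> X closure_of U = {}"
      by (simp add: openin_Int_closure_of_eq_empty disjnt_def Int_commute)
    then have "X closure_of U \<inter> K = {}"
      using \<open>K \<subseteq> V\<close> by blast
    then show ?thesis
      using \<open>openin X U\<close> \<open>{x} \<subseteq> U\<close> unfolding theta_closure_def by blast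
  qed
  then have "theta_closure X K \<subseteq> K"
    unfolding theta_closure_def by blast
  then show ?thesis
    using subset_theta_closure[OF compactin_subset_topspace[OF K]]
    unfolding theta_closed_def by blast
qed

lemma theta_closed_sing_imp_Hausdorff_space:
  assumes "\<And>y. y \<in> topspace X \<Longrightarrow> theta_closed X {y}"
  shows "Hausdorff_space X"
  unfolding Hausdorff_space_def
proof (intro allI impI)
  fix x y
  assume "x \<in> topspace X \<and> y \<in> topspace X \<and> x \<noteq> y"
  then have x: "x \<in> topspace X" and y: "y \<in> topspace X" and "x \<notin> theta_closure X {y}"
    using assms unfolding theta_closed_def by auto
  then obtain U where "openin X U" "x \<in> U" "y \<notin> X closure_of U"
    unfolding theta_closure_def by blast
  moreover have "U \<subseteq> X closure_of U"
    using closure_of_subset[OF openin_subset[OF \<open>openin X U\<close>]] .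
  ultimately show "\<exists>U V. openin X U \<and> openin X V \<and> x \<in> U \<and> y \<in> V \<and> disjnt U V"
    using y by (intro exI[of _ U] exI[of _ "topspace X - X closure_of U"]) (auto simp: disjnt_iff)
qed

lemma Hausdorff_space_iff_compactin_theta_closed:
  "Hausdorff_space X \<longleftrightarrow> (\<forall>K. compactin X K \<longrightarrow> theta_closed X K)"
proof (intro iffI allI impI)
  show "theta_closed X K" if "Hausdorff_space X" "compactin X K" for K
    using that by (rule compactin_imp_theta_closed)
next
  assume "\<forall>K. compactin X K \<longrightarrow> theta_closed X K"
  then show "Hausdorff_space X"
    by (intro theta_closed_sing_imp_Hausdorff_space) simp
qed

lemma finite_card_le_1_iff: "finite K \<and> card K \<le> 1 \<longleftrightarrow> K = {} \<or> (\<exists>x. K = {x})"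
proof
  assume K: "finite K \<and> card K \<le> 1"
  show "K = {} \<or> (\<exists>x. K = {x})"
  proof (cases "K = {}")
    case False
    then obtain x where "x \<in> K"
      by blast
    with K have "K = {x}"
      by (auto simp: card_le_Suc0_iff_eq)
    then show ?thesis
      by blast
  qed simp
qed auto

lemma compactin_card_le_1_iff:
  "(\<forall>K. compactin X K \<and> finite K \<and> card K \<le> 1 \<longrightarrow> P K) \<longleftrightarrow> P {} \<and> (\<forall>x\<in>topspace X. P {x})"
  unfolding finite_card_le_1_iff by auto

lemma delta_closed_empty: "delta_closed X {}"
proof -
  have "regular_open X (topspace X)"
    by (simp add: regular_open_def)
  then show ?thesis
    unfolding delta_closed_def by blast
qed

lemma lambda_closed_empty: "lambda_closed X {}"
proof -
  have "Lambda_set X (topspace X)"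
    unfolding Lambda_set_def by (intro exI[of _ "{}"]) simp
  then show ?thesis
    unfolding lambda_closed_def by blast
qed

lemma t0_space_iff_lambda_closed_sing:
  "t0_space X \<longleftrightarrow> (\<forall>x\<in>topspace X. lambda_closed X {x})"
proof (intro iffI ballI)
  fix x
  assume t0: "t0_space X" and x: "x \<in> topspace X"
  define L where "L = topspace X \<inter> \<Inter>{U. openin X U \<and> x \<in> U}"
  have "y = x" if y: "y \<in> L \<inter> X closure_of {x}" for y
  proof -
    have "y \<in> topspace X" "x \<in> X closure_of {y}"
      using x y unfolding L_def in_closure_of by auto
    then have "X closure_of {x} = X closure_of {y}"
      using y by (intro subset_antisym closure_of_minimal) auto
    with t0 x \<open>y \<in> topspace X\<close> show ?thesis
      by (metis t0_space_closure_of_sing)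
  qed
  moreover have "x \<in> L \<inter> X closure_of {x}"
    using x closure_of_subset[of "{x}" X] unfolding L_def by auto
  ultimately have x_eq: "{x} = L \<inter> X closure_of {x}"
    by blast
  show "lambda_closed X {x}"
    unfolding lambda_closed_def
  proof (intro exI conjI)
    show "Lambda_set X L"
      unfolding L_def Lambda_set_def by (intro exI[of _ "{U. openin X U \<and> x \<in> U}"]) auto
    show "closedin X (X closure_of {x})"
      by simp
    show "{x} = L \<inter> X closure_of {x}"
      by (fact x_eq)
  qed
next
  assume lambda: "\<forall>x\<in>topspace X. lambda_closed X {x}"
  show "t0_space X"
    unfolding t0_space_closure_of_sing
  proof (intro ballI impI)
    fix x y
    assume x: "x \<in> topspace X" and y: "y \<in> topspace X"
      and eq: "X closure_of {x} = X closure_of {y}"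
    obtain L C where L: "Lambda_set X L" and C: "closedin X C" and x_eq: "{x} = L \<inter> C"
      using lambda x unfolding lambda_closed_def by blast
    obtain \<U> where \<U>: "\<forall>U\<in>\<U>. openin X U" and L_eq: "L = topspace X \<inter> \<Inter>\<U>"
      using L unfolding Lambda_set_def by blast
    have "x \<in> L" "x \<in> C"
      using x_eq by auto
    have "x \<in> X closure_of {y}"
      using x eq closure_of_subset[of "{x}" X] by auto
    then have "y \<in> U" if "U \<in> \<U>" for U
      using \<open>x \<in> L\<close> L_eq \<U> that unfolding in_closure_of by auto
    then have "y \<in> L"
      using L_eq y by auto
    moreover have "y \<in> C"
    proof -
      have "X closure_of {x} \<subseteq> C"
        using \<open>x \<in> C\<close> C by (simp add: closure_of_minimal)
      moreover have "y \<in> X closure_of {y}"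
        using y closure_of_subset[of "{y}" X] by auto
      ultimately show ?thesis
        using eq by auto
    qed
    ultimately have "y \<in> {x}"
      unfolding x_eq by blast
    then show "x = y"
      by simp
  qed
qed

theorem mainTheorem1:
  fixes X :: "'a topology"
  shows "(completely_Hausdorff_space X \<longleftrightarrow>
            (\<forall>K. compactin X K \<and> K \<lesssim> topspace X \<longrightarrow> zero_closed X K))
       \<and> (Urysohn_space X \<longleftrightarrow> (\<forall>K. compactin X K \<longrightarrow> urysohn_closed X K))
       \<and> (Hausdorff_space X \<longleftrightarrow> (\<forall>K. compactin X K \<longrightarrow> theta_closed X K))
       \<and> (kc_space X \<longleftrightarrow> (\<forall>K. compactin X K \<longrightarrow> closedin X K))
       \<and> (weakly_Hausdorff_space X \<longleftrightarrow>
            (\<forall>K. compactin X K \<and> finite K \<and> card K \<le> 1 \<longrightarrow> delta_closed X K))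
       \<and> (t1_space X \<longleftrightarrow>
            (\<forall>K. compactin X K \<and> finite K \<and> card K \<le> 1 \<longrightarrow> closedin X K))
       \<and> (t0_space X \<longleftrightarrow>
            (\<forall>K. compactin X K \<and> finite K \<and> card K \<le> 1 \<longrightarrow> lambda_closed X K))"
proof (intro conjI)
  have "compactin X K \<Longrightarrow> K \<lesssim> topspace X" for K
    by (simp add: compactin_subset_topspace subset_imp_lepoll)
  then show "completely_Hausdorff_space X \<longleftrightarrow>
               (\<forall>K. compactin X K \<and> K \<lesssim> topspace X \<longrightarrow> zero_closed X K)"
    by (auto simp: completely_Hausdorff_space_iff_compactin_zero_closed)
  show "Urysohn_space X \<longleftrightarrow> (\<forall>K. compactin X K \<longrightarrow> urysohn_closed X K)"
    by (rule Urysohn_space_iff_compactin_urysohn_closed)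
  show "Hausdorff_space X \<longleftrightarrow> (\<forall>K. compactin X K \<longrightarrow> theta_closed X K)"
    by (rule Hausdorff_space_iff_compactin_theta_closed)
  show "kc_space X \<longleftrightarrow> (\<forall>K. compactin X K \<longrightarrow> closedin X K)"
    by (simp add: kc_space_def)
  show "weakly_Hausdorff_space X \<longleftrightarrow>
          (\<forall>K. compactin X K \<and> finite K \<and> card K \<le> 1 \<longrightarrow> delta_closed X K)"
    unfolding compactin_card_le_1_iff by (simp add: weakly_Hausdorff_space_def delta_closed_empty)
  show "t1_space X \<longleftrightarrow> (\<forall>K. compactin X K \<and> finite K \<and> card K \<le> 1 \<longrightarrow> closedin X K)"
    unfolding compactin_card_le_1_iff by (simp add: t1_space_closedin_singleton)
  show "t0_space X \<longleftrightarrow> (\<forall>K. compactin X K \<and> finite K \<and> card K \<le> 1 \<longrightarrow> lambda_closed X K)"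
    unfolding compactin_card_le_1_iff by (simp add: t0_space_iff_lambda_closed_sing lambda_closed_empty)
qed

end
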